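(* Let $(G,*,\le)$ be a totally ordered commutative semigroup, let $n\ge 1$, and let $a_1,a_2,\ldots,a_{2n}\in G$ (not necessarily distinct) with $a_1\le a_2\le\cdots\le a_{2n}$. Let $N\in G$. Suppose there are indices $i_1,j_1,\ldots,i_n,j_n$ with $\{i_1,j_1,\ldots,i_n,j_n\}=\{1,2,\ldots,2n\}$ (so these $2n$ indices are pairwise distinct and each of $1,\ldots,2n$ is used exactly once) such that $$a_{i_k}*a_{j_k}<N\quad\text{for all }k=1,\ldots,n.$$ Then $$a_k*a_{2n+1-k}<N\quad\text{for all }k=1,\ldots,n,$$ i.e. $a_1*a_{2n}<N$, $a_2*a_{2n-1}<N$, $\ldots$, $a_n*a_{n+1}<N$.
   Context: A totally ordered commutative semigroup is a triple $(G,*,\le)$ where $(G,* )$ is a commutative semigroup (an associative, commutative binary operation $*$ on a set $G$) and $\le$ is a total order on $G$ such that for all $\alpha,\beta,\gamma,\delta\in G$: if $\alpha\le\beta$ and $\gamma\le\delta$ then $\alpha*\gamma\le\beta*\delta$. Here $x<y$ means $x\le y$ and $x\ne y$. *)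

theory Defs
  imports Main
begin

definition tocs :: "('a \<Rightarrow> 'a \<Rightarrow> 'a) \<Rightarrow> ('a \<Rightarrow> 'a \<Rightarrow> bool) \<Rightarrow> bool" where
  "tocs mult le \<longleftrightarrow>
     (\<forall>x y z. mult (mult x y) z = mult x (mult y z)) \<and>
     (\<forall>x y. mult x y = mult y x) \<and>
     (\<forall>x. le x x) \<and>
     (\<forall>x y. le x y \<longrightarrow> le y x \<longrightarrow> x = y) \<and>
     (\<forall>x y z. le x y \<longrightarrow> le y z \<longrightarrow> le x z) \<and>
     (\<forall>x y. le x y \<or> le y x) \<and>
     (\<forall>\<alpha> \<beta> \<gamma> \<delta>. le \<alpha> \<beta> \<longrightarrow> le \<gamma> \<delta> \<longrightarrow> le (mult \<alpha> \<gamma>) (mult \<beta> \<delta>))"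

definition strict_of :: "('a \<Rightarrow> 'a \<Rightarrow> bool) \<Rightarrow> 'a \<Rightarrow> 'a \<Rightarrow> bool" where
  "strict_of le x y \<longleftrightarrow> le x y \<and> x \<noteq> y"

end

theory Submission
  imports Defs
begin

(* Fix k with 1 \<le> k \<le> n.  Among the n given pairs {i m, j m} there is
   one whose two indices are both \<ge> k and one of which is \<ge> 2n+1-k.  Indeed, the
   k "top" indices 2n+1-k, ..., 2n lie in pairs; if every such pair had its smaller
   index below k, these pairs would be at least k in number (the top indices are
   their larger entries) while their smaller entries would be distinct elements of
   {1..k-1}, which is impossible.  By monotonicity of the sequence a and of the
   product, a_k * a_{2n+1-k} is below the product of that pair, which is < N. *)

lemma tocs_mult_le_pair:
  assumes "tocs mult le"
    and "(le x u \<and> le y v) \<or> (le x v \<and> le y u)"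
  shows "le (mult x y) (mult u v)"
proof -
  have mono: "\<And>p q r s. le p q \<Longrightarrow> le r s \<Longrightarrow> le (mult p r) (mult q s)"
    and comm: "\<And>p q. mult p q = mult q p"
    using assms(1) unfolding tocs_def by simp_all
  from assms(2) show ?thesis
  proof
    assume "le x u \<and> le y v"
    then show ?thesis by (simp add: mono)
  next
    assume "le x v \<and> le y u"
    then have "le (mult x y) (mult v u)" by (simp add: mono)
    then show ?thesis by (simp add: comm)
  qed
qed

lemma tocs_le_strict_trans:
  assumes "tocs mult le" and "le x y" and "strict_of le y N"
  shows "strict_of le x N"
proof -
  have antisym: "\<And>p q. le p q \<Longrightarrow> le q p \<Longrightarrow> p = q"
    and trans: "\<And>p q r. le p q \<Longrightarrow> le q r \<Longrightarrow> le p r"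
    using assms(1) unfolding tocs_def by blast+
  have "le y N" "y \<noteq> N" using assms(3) unfolding strict_of_def by simp_all
  have "le x N" using trans[OF assms(2) \<open>le y N\<close>] .
  moreover have "x \<noteq> N"
    using antisym[OF assms(2)] \<open>le y N\<close> \<open>y \<noteq> N\<close> by blast
  ultimately show ?thesis unfolding strict_of_def by simp
qed

lemma stepwise_le_imp_mono:
  fixes a :: "nat \<Rightarrow> 'a" and lo hi p q :: nat
  assumes refl: "\<And>x. le x x" and trans: "\<And>x y z. le x y \<Longrightarrow> le y z \<Longrightarrow> le x z"
    and increasing: "\<And>k. lo \<le> k \<Longrightarrow> k < hi \<Longrightarrow> le (a k) (a (k + 1))"
    and "lo \<le> p" "p \<le> q" "q \<le> hi"
  shows "le (a p) (a q)"
  using \<open>p \<le> q\<close> \<open>q \<le> hi\<close>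
proof (induction q rule: dec_induct)
  case base
  show ?case by (rule refl)
next
  case (step q)
  have "le (a p) (a q)" using step.IH step.prems by simp
  moreover have "le (a q) (a (q + 1))"
    using step.hyps step.prems \<open>lo \<le> p\<close> by (intro increasing) simp_all
  ultimately have "le (a p) (a (q + 1))" by (rule trans)
  then show ?case by simp
qed

lemma perfect_pairing_distinct:
  assumes "finite A" and "card (i ` A \<union> j ` A) = 2 * card A"
  shows "inj_on i A" and "inj_on j A" and "i ` A \<inter> j ` A = {}"
proof -
  have fin: "finite (i ` A)" "finite (j ` A)" using assms(1) by simp_all
  have ci: "card (i ` A) \<le> card A" and cj: "card (j ` A) \<le> card A"
    by (simp_all add: card_image_le assms(1))
  have "card (i ` A \<union> j ` A) + card (i ` A \<inter> j ` A) = card (i ` A) + card (j ` A)"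
    using card_Un_Int[OF fin] by simp
  with assms(2) ci cj have "card (i ` A) = card A" "card (j ` A) = card A"
    and "card (i ` A \<inter> j ` A) = 0" by linarith+
  then show "inj_on i A" "inj_on j A" "i ` A \<inter> j ` A = {}"
    using eq_card_imp_inj_on[OF assms(1)] fin by auto
qed

lemma perfect_pairing_min_inj:
  assumes "inj_on i A" and "inj_on j A" and "i ` A \<inter> j ` A = {}"
  shows "inj_on (\<lambda>m. min (i m) (j m)) A"
proof (rule inj_onI)
  fix m m' assume m: "m \<in> A" "m' \<in> A" and eq: "min (i m) (j m) = min (i m') (j m')"
  have "i m \<noteq> j m'" "j m \<noteq> i m'" using assms(3) m by blast+
  with eq have "i m = i m' \<or> j m = j m'" by (auto simp: min_def split: if_splits)
  then show "m = m'" using assms(1,2) m by (auto dest: inj_onD)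
qed

text \<open>The pairs containing
  one of the k top indices have those indices as larger entries, so there are at
  least k of them; their distinct smaller entries cannot all lie in {1..k-1}.\<close>

lemma perfect_pairing_dominating_pair:
  assumes "finite A" and "card A = n"
    and cover: "i ` A \<union> j ` A = {1..2 * n}"
    and k: "1 \<le> k" "k \<le> n"
  shows "\<exists>m\<in>A. k \<le> i m \<and> k \<le> j m \<and> (2 * n + 1 - k \<le> i m \<or> 2 * n + 1 - k \<le> j m)"
proof (rule ccontr)
  assume none: "\<not> ?thesis"
  let ?lo = "\<lambda>m. min (i m) (j m)" and ?hi = "\<lambda>m. max (i m) (j m)"
  define K where "K = {m \<in> A. 2 * n + 1 - k \<le> ?hi m}"
  have finK: "finite K" using assms(1) unfolding K_def by simp
  have "card (i ` A \<union> j ` A) = 2 * card A" using cover assms(2) by simp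
  from perfect_pairing_distinct[OF assms(1) this]
  have "inj_on ?lo A" by (rule perfect_pairing_min_inj)
  then have lo_inj: "inj_on ?lo K" by (rule inj_on_subset) (auto simp: K_def)
  have lo_small: "?lo ` K \<subseteq> {1..k - 1}"
  proof
    fix x assume "x \<in> ?lo ` K"
    then obtain m where m: "m \<in> A" "2 * n + 1 - k \<le> ?hi m" and x: "x = ?lo m"
      unfolding K_def by blast
    have "i m \<in> {1..2 * n}" "j m \<in> {1..2 * n}" using cover m(1) by blast+
    with none m k x show "x \<in> {1..k - 1}" by (auto simp: min_def max_def)
  qed
  have top_large: "{2 * n + 1 - k..2 * n} \<subseteq> ?hi ` K"
  proof
    fix t assume t: "t \<in> {2 * n + 1 - k..2 * n}"
    then have "t \<in> i ` A \<union> j ` A" using cover k by auto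
    then obtain m where m: "m \<in> A" and tm: "t = i m \<or> t = j m" by blast
    have "t = ?hi m" using none m tm t k by (auto simp: max_def)
    moreover have "m \<in> K" using m tm t unfolding K_def by auto
    ultimately show "t \<in> ?hi ` K" by blast
  qed
  have "k = card {2 * n + 1 - k..2 * n}" using k by simp
  also have "\<dots> \<le> card (?hi ` K)" using top_large finK by (intro card_mono) simp_all
  also have "\<dots> \<le> card K" using finK by (rule card_image_le)
  also have "\<dots> = card (?lo ` K)" using lo_inj by (simp add: card_image)
  also have "\<dots> \<le> k - 1" using card_mono[OF _ lo_small] by simp
  finally show False using k by simp
qed

theorem theorem2p2:
  fixes mult :: "'a \<Rightarrow> 'a \<Rightarrow> 'a" and le :: "'a \<Rightarrow> 'a \<Rightarrow> bool"
    and n :: nat and a :: "nat \<Rightarrow> 'a" and N :: 'a and i j :: "nat \<Rightarrow> nat"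
  assumes "tocs mult le"
    and "n \<ge> 1"
    and "\<forall>k. 1 \<le> k \<and> k < 2 * n \<longrightarrow> le (a k) (a (k + 1))"
    and "i ` {1..n} \<union> j ` {1..n} = {1..2 * n}"
    and "\<forall>k\<in>{1..n}. strict_of le (mult (a (i k)) (a (j k))) N"
  shows "\<forall>k\<in>{1..n}. strict_of le (mult (a k) (a (2 * n + 1 - k))) N"
proof
  fix k assume k: "k \<in> {1..n}"
  have refl: "\<And>x. le x x" and trans: "\<And>x y z. le x y \<Longrightarrow> le y z \<Longrightarrow> le x z"
    using assms(1) unfolding tocs_def by blast+
  have sorted: "le (a p) (a q)" if "1 \<le> p" "p \<le> q" "q \<le> 2 * n" for p q
  proof (rule stepwise_le_imp_mono[where le = le and a = a and lo = 1 and hi = "2 * n"])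
    show "le x x" for x by (rule refl)
    show "le x z" if "le x y" "le y z" for x y z using that by (rule trans)
    show "le (a k) (a (k + 1))" if "1 \<le> k" "k < 2 * n" for k using assms(3) that by blast
  qed (use that in simp_all)
  obtain m where m: "m \<in> {1..n}" and dom: "k \<le> i m" "k \<le> j m"
    "2 * n + 1 - k \<le> i m \<or> 2 * n + 1 - k \<le> j m"
    using perfect_pairing_dominating_pair[OF _ _ assms(4), of k] k by auto
  have "i m \<le> 2 * n" "j m \<le> 2 * n" using assms(4) m by auto
  with dom k have "le (mult (a k) (a (2 * n + 1 - k))) (mult (a (i m)) (a (j m)))"
    by (intro tocs_mult_le_pair[OF assms(1)]) (auto intro: sorted)
  then show "strict_of le (mult (a k) (a (2 * n + 1 - k))) N"
    using tocs_le_strict_trans[OF assms(1)] assms(5) m by blast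
qed

end
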